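(* Let $\zeta\in\mathbb{C}^\times$ have finite order $\ell\ge1$, and identify the dominant weights of $\mathfrak{sl}_2$ with the nonnegative integers. For $j\ge0$ put $s_j=j$ if $j$ is odd and $s_j=j/2$ if $j$ is even. Then the quantum Weyl module $\Delta_\zeta(\lambda)$ for $U_\zeta(\mathfrak{sl}_2)$ is irreducible if and only if either (a) $0\le\lambda<s_\ell$, or (b) $\lambda\equiv-1\pmod{s_\ell}$.
   Context: $U_\zeta(\mathfrak{sl}_2)=\mathbb{U}_q^{\mathcal{A}}(\mathfrak{sl}_2)\otimes_{\mathcal{A}}\mathbb{C}$ ($q\mapsto\zeta$) is the specialization of Lusztig's divided-power $\mathcal{A}$-form ($\mathcal{A}=\mathbb{Q}[q,q^{-1}]$) of the quantum enveloping algebra of $\mathfrak{sl}_2$. Modules are integrable of type 1. For a dominant weight $\lambda$, $\nabla_\zeta(\lambda)$ is the induced module from the Borel part with character given by Weyl's formula, and the quantum Weyl module is $\Delta_\zeta(\lambda)=\nabla_\zeta(-w_0\lambda)^*$. *)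

theory Defs
  imports "HOL-Number_Theory.Cong" Complex_Main
begin

text \<open>Gaussian (quantum) binomial coefficient [m, t] in Z[q,q^-1], specialized at q = z.
  Defined by the Pascal-type recursion [m,t] = q^t [m-1,t] + q^-(m-t) [m-1,t-1],
  [0,0] = 1, [0,t+1] = 0, which holds already in the Laurent polynomial ring,
  so this is the image of the A-valued binomial under q |-> z.\<close>
fun qbin :: "complex \<Rightarrow> nat \<Rightarrow> nat \<Rightarrow> complex" where
  "qbin z 0 t = (if t = 0 then 1 else 0)"
| "qbin z (Suc m) 0 = 1"
| "qbin z (Suc m) (Suc t) =
     z ^ Suc t * qbin z m (Suc t) + inverse z ^ (m - t) * qbin z m t"

text \<open>Underlying space of the Weyl module Delta(lam): coordinate vectors
  w.r.t. the basis v_0, ..., v_lam (v_j = F^(j) v_0).\<close>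
definition weyl_space :: "nat \<Rightarrow> (nat \<Rightarrow> complex) set" where
  "weyl_space lam = {v. \<forall>i>lam. v i = 0}"

text \<open>Action of divided powers and K on Delta(lam):
  E^(r) v_j = [lam-j+r, r] v_(j-r),  F^(r) v_j = [j+r, r] v_(j+r),  K v_j = z^(lam-2j) v_j.\<close>
definition weyl_E :: "complex \<Rightarrow> nat \<Rightarrow> nat \<Rightarrow> (nat \<Rightarrow> complex) \<Rightarrow> (nat \<Rightarrow> complex)" where
  "weyl_E z lam r v = (\<lambda>i. if i + r \<le> lam then qbin z (lam - i) r * v (i + r) else 0)"

definition weyl_F :: "complex \<Rightarrow> nat \<Rightarrow> nat \<Rightarrow> (nat \<Rightarrow> complex) \<Rightarrow> (nat \<Rightarrow> complex)" where
  "weyl_F z lam r v = (\<lambda>i. if r \<le> i \<and> i \<le> lam then qbin z i r * v (i - r) else 0)"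

definition weyl_K :: "complex \<Rightarrow> nat \<Rightarrow> int \<Rightarrow> (nat \<Rightarrow> complex) \<Rightarrow> (nat \<Rightarrow> complex)" where
  "weyl_K z lam e v = (\<lambda>i. if i \<le> lam then z powi (e * (int lam - 2 * int i)) * v i else 0)"

definition csubspace :: "(nat \<Rightarrow> complex) set \<Rightarrow> bool" where
  "csubspace W \<longleftrightarrow> (\<lambda>i. 0) \<in> W \<and> (\<forall>x\<in>W. \<forall>y\<in>W. (\<lambda>i. x i + y i) \<in> W) \<and> (\<forall>c::complex. \<forall>x\<in>W. (\<lambda>i. c * x i) \<in> W)"

text \<open>U_z(sl2)-submodule of Delta(lam): subspace stable under the generators
  E^(r), F^(r), K^(+-1) of the specialized divided-power algebra.\<close>
definition weyl_submodule :: "complex \<Rightarrow> nat \<Rightarrow> (nat \<Rightarrow> complex) set \<Rightarrow> bool" where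
  "weyl_submodule z lam W \<longleftrightarrow> csubspace W \<and> W \<subseteq> weyl_space lam \<and>
     (\<forall>r. \<forall>v\<in>W. weyl_E z lam r v \<in> W) \<and>
     (\<forall>r. \<forall>v\<in>W. weyl_F z lam r v \<in> W) \<and>
     (\<forall>e\<in>{1, -1}. \<forall>v\<in>W. weyl_K z lam e v \<in> W)"

definition weyl_irreducible :: "complex \<Rightarrow> nat \<Rightarrow> bool" where
  "weyl_irreducible z lam \<longleftrightarrow> weyl_space lam \<noteq> {\<lambda>i. 0} \<and>
     (\<forall>W. weyl_submodule z lam W \<longrightarrow> W = {\<lambda>i. 0} \<or> W = weyl_space lam)"

definition s_of :: "nat \<Rightarrow> nat" where
  "s_of j = (if odd j then j else j div 2)"

end

theory Submission
  imports Defs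
begin

(* The divided powers act on the basis v_0, ..., v_lam of the Weyl module through the quantum
   binomials [m, t] at z.  Up to a power of z these are Gaussian binomials in p = z^2, and p has
   order e = s_l.  The q-Lucas theorem then shows that [m, t] = 0 exactly when m mod e < t mod e.
   If [lam, r] <> 0 for all r <= lam, every nonzero submodule contains v_lam (apply F^(lam-j) to a
   vector whose first nonzero coordinate is j) and hence, applying the E^(r), every v_k; this is
   the case precisely when lam < e or lam mod e = e - 1.  Otherwise the span of the v_i with
   i mod e > lam mod e is a proper nonzero submodule. *)

fun gauss_binomial :: "'a::comm_ring_1 \<Rightarrow> nat \<Rightarrow> nat \<Rightarrow> 'a" where
  "gauss_binomial p 0 t = (if t = 0 then 1 else 0)"
| "gauss_binomial p (Suc m) 0 = 1"
| "gauss_binomial p (Suc m) (Suc t) =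
     p ^ Suc t * gauss_binomial p m (Suc t) + gauss_binomial p m t"

lemma gauss_binomial_0_right [simp]: "gauss_binomial p m 0 = 1"
  by (cases m) auto

lemma gauss_binomial_eq_0: "m < t \<Longrightarrow> gauss_binomial p m t = 0"
  by (induction p m t rule: gauss_binomial.induct) auto

lemma gauss_binomial_diag [simp]: "gauss_binomial p m m = 1"
  by (induction m) (auto simp: gauss_binomial_eq_0)

lemma gauss_binomial_prod:
  "gauss_binomial p m t * (\<Prod>k\<in>{1..t}. 1 - p ^ k) = (\<Prod>k<t. 1 - p ^ (m - k))"
proof (induction m arbitrary: t)
  case 0
  then show ?case
    by (cases t) (simp_all add: lessThan_Suc_eq_insert_0)
next
  case (Suc m)
  show ?case
  proof (cases t)
    case 0
    then show ?thesis by simp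
  next
    case (Suc t)
    have "gauss_binomial p (Suc m) (Suc t) * (\<Prod>k\<in>{1..Suc t}. 1 - p ^ k)
        = p ^ Suc t * (gauss_binomial p m (Suc t) * (\<Prod>k\<in>{1..Suc t}. 1 - p ^ k))
          + (1 - p ^ Suc t) * (gauss_binomial p m t * (\<Prod>k\<in>{1..t}. 1 - p ^ k))"
      by (simp add: prod.nat_ivl_Suc' algebra_simps)
    also have "\<dots> = p ^ Suc t * (\<Prod>k<Suc t. 1 - p ^ (m - k))
                      + (1 - p ^ Suc t) * (\<Prod>k<t. 1 - p ^ (m - k))"
      by (simp only: Suc.IH)
    also have "\<dots> = (\<Prod>k<t. 1 - p ^ (m - k)) * (1 - p ^ Suc t * p ^ (m - t))"
      by (simp add: algebra_simps)
    also have "\<dots> = (\<Prod>k<Suc t. 1 - p ^ (Suc m - k))"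
    proof (cases "t \<le> m")
      case True
      then have "p ^ Suc t * p ^ (m - t) = p ^ Suc m"
        by (subst power_add[symmetric]) simp
      then show ?thesis
        unfolding prod.lessThan_Suc_shift by (simp add: mult.commute)
    next
      case False
      have "(\<Prod>k<t. 1 - p ^ (m - k)) = 0"
        using False by (intro prod_zero) (auto intro!: bexI[of _ m])
      moreover have "(\<Prod>k<Suc t. 1 - p ^ (Suc m - k)) = 0"
        using False by (intro prod_zero) (auto intro!: bexI[of _ "Suc m"])
      ultimately show ?thesis by simp
    qed
    finally show ?thesis
      using Suc by simp
  qed
qed

lemma gauss_binomial_neq_0:
  fixes p :: "'a::idom"
  assumes "\<forall>k\<in>{1..m}. p ^ k \<noteq> 1" and "t \<le> m"
  shows "gauss_binomial p m t \<noteq> 0"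
proof
  assume "gauss_binomial p m t = 0"
  then have "(\<Prod>k<t. 1 - p ^ (m - k)) = 0"
    using gauss_binomial_prod[of p m t] by simp
  then obtain k where "k < t" "p ^ (m - k) = 1"
    by auto
  then show False
    using assms by force
qed

lemma gauss_binomial_root_of_unity_eq_0:
  fixes p :: "'a::idom"
  assumes "p ^ m = 1" and "\<forall>k\<in>{1..t}. p ^ k \<noteq> 1" and "0 < t" and "t < m"
  shows "gauss_binomial p m t = 0"
proof -
  have "(\<Prod>k<t. 1 - p ^ (m - k)) = 0"
    using assms by (intro prod_zero) (auto intro!: bexI[of _ 0])
  moreover have "(\<Prod>k\<in>{1..t}. 1 - p ^ k) \<noteq> 0"
    using assms(2) by auto
  ultimately show ?thesis
    using gauss_binomial_prod[of p m t] by (metis mult_eq_0_iff)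
qed

lemma gauss_binomial_add_order:
  fixes p :: "'a::idom"
  assumes order: "\<And>k. p ^ k = 1 \<longleftrightarrow> e dvd k" and "0 < e"
  shows "gauss_binomial p (m + e) t
           = gauss_binomial p m t + (if e \<le> t then gauss_binomial p m (t - e) else 0)"
proof (induction m arbitrary: t)
  case 0
  have "\<forall>k\<in>{1..t}. p ^ k \<noteq> 1" if "t < e"
    using that order by (auto dest: dvd_imp_le)
  then have "gauss_binomial p e t = 0" if "0 < t" "t < e"
    using that order by (intro gauss_binomial_root_of_unity_eq_0) auto
  then show ?case
    using gauss_binomial_eq_0[of e t] gauss_binomial_eq_0[of 0 "t - e"] \<open>0 < e\<close>
    by (cases t e rule: linorder_cases) auto
next
  case (Suc m)
  show ?case
  proof (cases t)
    case 0
    then show ?thesis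
      using assms by simp
  next
    case (Suc t)
    have step: "gauss_binomial p (Suc m + e) (Suc t)
        = p ^ Suc t * gauss_binomial p (m + e) (Suc t) + gauss_binomial p (m + e) t"
      by simp
    show ?thesis
    proof (cases "e \<le> t")
      case True
      then have "p ^ t = p ^ (t - e)"
        using order[of e] by (metis le_add_diff_inverse2 mult_1_right power_add dvd_refl)
      with True show ?thesis
        unfolding Suc step Suc.IH by (simp add: Suc_diff_le algebra_simps)
    next
      case False
      then show ?thesis
        unfolding Suc step Suc.IH using order[of e] by (auto simp: not_less_eq_eq)
    qed
  qed
qed

lemma gauss_binomial_lucas:
  fixes p :: "'a::idom"
  assumes order: "\<And>k. p ^ k = 1 \<longleftrightarrow> e dvd k" and "0 < e" and "b < e"
  shows "gauss_binomial p (e * a + b) t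
           = of_nat (a choose (t div e)) * gauss_binomial p b (t mod e)"
proof (induction a arbitrary: t)
  case 0
  show ?case
  proof (cases "t < e")
    case True
    then show ?thesis by simp
  next
    case False
    then have "0 < t div e"
      using \<open>0 < e\<close> by (simp add: div_greater_zero_iff)
    then show ?thesis
      using False \<open>b < e\<close> by (simp add: gauss_binomial_eq_0 binomial_eq_0)
  qed
next
  case (Suc a)
  have "gauss_binomial p (e * Suc a + b) t
      = gauss_binomial p (e * a + b) t
        + (if e \<le> t then gauss_binomial p (e * a + b) (t - e) else 0)"
    using gauss_binomial_add_order[OF order \<open>0 < e\<close>, of "e * a + b"]
    by (simp add: algebra_simps)
  also have "\<dots> = of_nat (Suc a choose (t div e)) * gauss_binomial p b (t mod e)"
  proof (cases "e \<le> t")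
    case True
    then obtain k where k: "t div e = Suc k"
      using \<open>0 < e\<close> by (metis div_greater_zero_iff not0_implies_Suc neq0_conv)
    have "(t - e) div e = k" "(t - e) mod e = t mod e"
      using True k \<open>0 < e\<close> by (simp_all add: le_div_geq le_mod_geq)
    then show ?thesis
      using True unfolding Suc.IH k by (simp add: algebra_simps)
  next
    case False
    then show ?thesis
      unfolding Suc.IH by simp
  qed
  finally show ?case .
qed

lemma gauss_binomial_eq_0_iff:
  fixes p :: "'a::{idom, ring_char_0}"
  assumes order: "\<And>k. p ^ k = 1 \<longleftrightarrow> e dvd k" and "0 < e" and "t \<le> m"
  shows "gauss_binomial p m t = 0 \<longleftrightarrow> m mod e < t mod e"
proof -
  have "gauss_binomial p m t = gauss_binomial p (e * (m div e) + m mod e) t"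
    by simp
  also have "\<dots> = of_nat (m div e choose (t div e)) * gauss_binomial p (m mod e) (t mod e)"
    using assms by (intro gauss_binomial_lucas) auto
  finally have lucas: "gauss_binomial p m t = \<dots>" .
  have "m div e choose (t div e) \<noteq> 0"
    using div_le_mono[OF \<open>t \<le> m\<close>, of e] by (simp add: not_less)
  moreover have "\<forall>k\<in>{1..m mod e}. p ^ k \<noteq> 1"
  proof
    fix k
    assume "k \<in> {1..m mod e}"
    then have "0 < k" "k < e"
      using mod_less_divisor[OF \<open>0 < e\<close>, of m] by auto
    then show "p ^ k \<noteq> 1"
      using order by (auto dest: dvd_imp_le)
  qed
  ultimately show ?thesis
    unfolding lucas using gauss_binomial_eq_0 gauss_binomial_neq_0
    by (metis not_le mult_eq_0_iff of_nat_eq_0_iff)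
qed

lemma qbin_0_right [simp]: "qbin z m 0 = 1"
  by (cases m) auto

lemma qbin_eq_0: "m < t \<Longrightarrow> qbin z m t = 0"
  by (induction z m t rule: qbin.induct) auto

lemma qbin_diag [simp]: "qbin z m m = 1"
  by (induction m) (auto simp: qbin_eq_0)

lemma qbin_eq_gauss_binomial:
  assumes "z \<noteq> 0"
  shows "z ^ (t * (m - t)) * qbin z m t = gauss_binomial (z ^ 2) m t"
proof (induction m arbitrary: t)
  case 0
  then show ?case by simp
next
  case (Suc m)
  consider "t = 0" | "t = Suc m" | "Suc m < t" | t' d where "t = Suc t'" "m = t' + Suc d"
    by (metis Suc_lessI add_Suc_right less_imp_Suc_add not0_implies_Suc not_less_eq)
  then show ?case
  proof cases
    case 4
    have inv: "z ^ (Suc t' * Suc d) * inverse z ^ Suc d = z ^ (t' * Suc d)"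
      using assms by (simp add: power_add field_simps)
    have sq: "z ^ (Suc t' * Suc d) * z ^ Suc t' = (z ^ 2) ^ Suc t' * z ^ (Suc t' * d)"
      by (simp only: power_add[symmetric] power_mult[symmetric])
        (simp add: algebra_simps mult_2_right)
    have "z ^ (t * (Suc m - t)) * qbin z (Suc m) t
        = (z ^ (Suc t' * Suc d) * z ^ Suc t') * qbin z m (Suc t')
          + (z ^ (Suc t' * Suc d) * inverse z ^ Suc d) * qbin z m t'"
      using 4 by (simp add: algebra_simps)
    also have "\<dots> = (z ^ 2) ^ Suc t' * (z ^ (Suc t' * (m - Suc t')) * qbin z m (Suc t'))
        + z ^ (t' * (m - t')) * qbin z m t'"
      unfolding inv sq using 4 by (simp add: mult.assoc)
    also have "\<dots> = gauss_binomial (z ^ 2) (Suc m) t"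
      by (simp only: Suc.IH) (simp add: 4(1))
    finally show ?thesis .
  qed (simp_all add: qbin_eq_0 gauss_binomial_eq_0)
qed

lemma power_eq_1_iff_dvd_order:
  fixes z :: "'a::monoid_mult"
  assumes "0 < l" and "z ^ l = 1" and "\<forall>k. 0 < k \<and> k < l \<longrightarrow> z ^ k \<noteq> 1"
  shows "z ^ n = 1 \<longleftrightarrow> l dvd n"
proof
  have "z ^ n = z ^ (l * (n div l) + n mod l)"
    by simp
  also have "\<dots> = z ^ (n mod l)"
    using \<open>z ^ l = 1\<close> by (simp only: power_add power_mult) simp
  finally have "z ^ n = z ^ (n mod l)" .
  moreover assume "z ^ n = 1"
  ultimately have "n mod l = 0"
    using assms(3) mod_less_divisor[OF \<open>0 < l\<close>, of n] by auto
  then show "l dvd n"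
    by (simp add: dvd_eq_mod_eq_0)
next
  assume "l dvd n"
  then show "z ^ n = 1"
    using \<open>z ^ l = 1\<close> by (elim dvdE) (simp add: power_mult)
qed

lemma qbin_eq_0_iff:
  assumes "z \<noteq> 0" and order: "\<And>k. (z ^ 2) ^ k = 1 \<longleftrightarrow> e dvd k" and "0 < e" and "t \<le> m"
  shows "qbin z m t = 0 \<longleftrightarrow> m mod e < t mod e"
proof -
  have "qbin z m t = 0 \<longleftrightarrow> gauss_binomial (z ^ 2) m t = 0"
    using qbin_eq_gauss_binomial[OF \<open>z \<noteq> 0\<close>, of t m] \<open>z \<noteq> 0\<close> by auto
  also have "\<dots> \<longleftrightarrow> m mod e < t mod e"
    using order \<open>0 < e\<close> \<open>t \<le> m\<close> by (rule gauss_binomial_eq_0_iff)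
  finally show ?thesis .
qed

lemma mod_add_carry_cases:
  fixes x y e :: nat
  assumes "0 < e"
  shows "(x + y) mod e = x mod e + y mod e \<or> (x + y) mod e + e = x mod e + y mod e"
proof -
  have "x mod e + y mod e < 2 * e"
    using mod_less_divisor[OF assms, of x] mod_less_divisor[OF assms, of y] by linarith
  moreover have "(x + y) mod e = (x mod e + y mod e) mod e"
    by (simp add: mod_add_eq)
  ultimately show ?thesis
    by (cases "x mod e + y mod e < e") (simp_all add: le_mod_geq)
qed

lemma mod_diff_less_if_mod_add_exceeds:
  fixes e i r lam :: nat
  assumes "0 < e" and "i \<le> lam" and "i mod e \<le> lam mod e" and "lam mod e < (i + r) mod e"
  shows "(lam - i) mod e < r mod e"
proof -
  have "(i + r) mod e = i mod e + r mod e"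
    using mod_add_carry_cases[OF \<open>0 < e\<close>, of i r] mod_less_divisor[OF \<open>0 < e\<close>, of r]
      assms(3,4) by linarith
  moreover have "lam mod e = (lam - i) mod e + i mod e"
    using mod_add_carry_cases[OF \<open>0 < e\<close>, of "lam - i" i]
      mod_less_divisor[OF \<open>0 < e\<close>, of "lam - i"] assms(2,3) by auto
  ultimately show ?thesis
    using assms(4) by linarith
qed

lemma mod_less_if_mod_diff_exceeds:
  fixes e i r L :: nat
  assumes "0 < e" and "r \<le> i" and "i mod e \<le> L" and "L < (i - r) mod e"
  shows "i mod e < r mod e"
proof -
  have "i mod e = (i - r) mod e + r mod e \<or> i mod e + e = (i - r) mod e + r mod e"
    using mod_add_carry_cases[OF \<open>0 < e\<close>, of "i - r" r] \<open>r \<le> i\<close> by simp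
  moreover have "(i - r) mod e < e"
    using \<open>0 < e\<close> by simp
  ultimately show ?thesis
    using assms(3,4) by linarith
qed

lemma csubspace_sum:
  assumes "csubspace W" and "finite A" and "\<forall>k\<in>A. f k \<in> W"
  shows "(\<lambda>i. \<Sum>k\<in>A. f k i) \<in> W"
  using assms(2,3)
proof (induction A rule: finite_induct)
  case empty
  then show ?case
    using \<open>csubspace W\<close> by (simp add: csubspace_def)
next
  case (insert k A)
  then show ?case
    using \<open>csubspace W\<close> unfolding csubspace_def by simp
qed

definition weyl_basis :: "nat \<Rightarrow> nat \<Rightarrow> complex" where
  "weyl_basis k = (\<lambda>i. if i = k then 1 else 0)"

lemma weyl_basis_in_space: "k \<le> lam \<Longrightarrow> weyl_basis k \<in> weyl_space lam"
  by (simp add: weyl_basis_def weyl_space_def)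

lemma weyl_basis_neq_0: "weyl_basis k \<noteq> (\<lambda>i. 0)"
  by (metis weyl_basis_def one_neq_zero)

lemma weyl_space_sum_basis:
  assumes "v \<in> weyl_space lam"
  shows "v = (\<lambda>i. \<Sum>k\<le>lam. v k * weyl_basis k i)"
proof
  fix i
  have "(\<Sum>k\<le>lam. v k * weyl_basis k i) = (if i \<le> lam then v i else 0)"
    by (simp add: weyl_basis_def if_distrib cong: if_cong)
  then show "v i = (\<Sum>k\<le>lam. v k * weyl_basis k i)"
    using assms by (simp add: weyl_space_def)
qed

lemma weyl_E_basis_last:
  assumes "k \<le> lam"
  shows "weyl_E z lam (lam - k) (weyl_basis lam) = weyl_basis k"
  using assms by (intro ext) (auto simp: weyl_E_def weyl_basis_def)

lemma weyl_F_leading_coordinate: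
  assumes "w \<in> weyl_space lam" and "j \<le> lam" and "\<forall>i<j. w i = 0"
  shows "weyl_F z lam (lam - j) w = (\<lambda>i. qbin z lam (lam - j) * w j * weyl_basis lam i)"
proof
  fix i
  show "weyl_F z lam (lam - j) w i = qbin z lam (lam - j) * w j * weyl_basis lam i"
  proof (cases "i = lam")
    case False
    then have "w (i - (lam - j)) = 0" if "lam - j \<le> i" "i \<le> lam"
      using that assms(3) by auto
    then show ?thesis
      using False by (simp add: weyl_F_def weyl_basis_def)
  qed (simp add: weyl_F_def weyl_basis_def \<open>j \<le> lam\<close>)
qed

lemma weyl_submodule_eq_space_if_last:
  assumes sub: "weyl_submodule z lam W" and last: "weyl_basis lam \<in> W"
  shows "W = weyl_space lam"
proof
  show "W \<subseteq> weyl_space lam"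
    using sub by (simp add: weyl_submodule_def)
next
  have cs: "csubspace W" and E: "\<And>r v. v \<in> W \<Longrightarrow> weyl_E z lam r v \<in> W"
    using sub by (auto simp: weyl_submodule_def)
  have "weyl_basis k \<in> W" if "k \<le> lam" for k
    using E[OF last, of "lam - k"] by (simp add: weyl_E_basis_last[OF that])
  then have sum: "(\<lambda>i. \<Sum>k\<le>lam. v k * weyl_basis k i) \<in> W" for v
    using cs by (intro csubspace_sum) (auto simp: csubspace_def)
  show "weyl_space lam \<subseteq> W"
  proof
    fix v
    assume "v \<in> weyl_space lam"
    then show "v \<in> W"
      using sum[of v] weyl_space_sum_basis by metis
  qed
qed

lemma weyl_irreducible_if_qbin_neq_0:
  assumes "\<forall>r\<le>lam. qbin z lam r \<noteq> 0"
  shows "weyl_irreducible z lam"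
  unfolding weyl_irreducible_def
proof (intro conjI allI impI)
  show "weyl_space lam \<noteq> {\<lambda>i. 0}"
    using weyl_basis_in_space[of 0 lam] weyl_basis_neq_0 by blast
next
  fix W
  assume sub: "weyl_submodule z lam W"
  then have zero: "(\<lambda>i. 0) \<in> W" and scale: "\<And>c v. v \<in> W \<Longrightarrow> (\<lambda>i. c * v i) \<in> W"
    and space: "W \<subseteq> weyl_space lam" and F: "\<And>r v. v \<in> W \<Longrightarrow> weyl_F z lam r v \<in> W"
    unfolding weyl_submodule_def csubspace_def by auto
  show "W = {\<lambda>i. 0} \<or> W = weyl_space lam"
  proof (cases "W = {\<lambda>i. 0}")
    case False
    then obtain w where w: "w \<in> W" "w \<noteq> (\<lambda>i. 0)"
      using zero by blast
    define j where "j = (LEAST j. w j \<noteq> 0)"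
    have wj: "w j \<noteq> 0"
      unfolding j_def by (rule LeastI_ex) (use w(2) in auto)
    have below: "\<forall>i<j. w i = 0"
      unfolding j_def using not_less_Least by blast
    have "\<forall>i>lam. w i = 0"
      using w(1) space by (auto simp: weyl_space_def)
    then have "j \<le> lam"
      using wj not_le by blast
    define c where "c = qbin z lam (lam - j) * w j"
    have "c \<noteq> 0"
      using assms wj by (simp add: c_def)
    have "weyl_F z lam (lam - j) w = (\<lambda>i. c * weyl_basis lam i)"
      unfolding c_def using w(1) space \<open>j \<le> lam\<close> below
      by (intro weyl_F_leading_coordinate) auto
    moreover have "(\<lambda>i. inverse c * weyl_F z lam (lam - j) w i) \<in> W"
      using F[OF w(1)] by (rule scale)
    ultimately have "weyl_basis lam \<in> W"
      using \<open>c \<noteq> 0\<close> by (simp flip: mult.assoc)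
    then show ?thesis
      using weyl_submodule_eq_space_if_last[OF sub] by blast
  qed simp
qed

lemma weyl_submodule_high_residues:
  assumes "0 < e"
    and vanish: "\<And>m t. t \<le> m \<Longrightarrow> m mod e < t mod e \<Longrightarrow> qbin z m t = 0"
  shows "weyl_submodule z lam {v \<in> weyl_space lam. \<forall>i. i mod e \<le> lam mod e \<longrightarrow> v i = 0}"
    (is "weyl_submodule z lam ?W")
proof -
  have E: "weyl_E z lam r v i = 0" if "v \<in> ?W" "i mod e \<le> lam mod e" for r v i
  proof (cases "i + r \<le> lam \<and> v (i + r) \<noteq> 0")
    case True
    then have "lam mod e < (i + r) mod e"
      using that(1) not_le by blast
    then have "(lam - i) mod e < r mod e"
      using True that(2) \<open>0 < e\<close> by (intro mod_diff_less_if_mod_add_exceeds) auto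
    moreover have "r \<le> lam - i"
      using True by linarith
    ultimately show ?thesis
      using vanish by (simp add: weyl_E_def)
  qed (auto simp: weyl_E_def)
  have F: "weyl_F z lam r v i = 0" if "v \<in> ?W" "i mod e \<le> lam mod e" for r v i
  proof (cases "r \<le> i \<and> i \<le> lam \<and> v (i - r) \<noteq> 0")
    case True
    then have "lam mod e < (i - r) mod e"
      using that(1) not_le by blast
    then have "i mod e < r mod e"
      using True that(2) \<open>0 < e\<close> by (intro mod_less_if_mod_diff_exceeds) auto
    then show ?thesis
      using True vanish[of r i] by (simp add: weyl_F_def)
  qed (auto simp: weyl_F_def)
  show ?thesis
    unfolding weyl_submodule_def csubspace_def
    using E F by (auto simp: weyl_space_def weyl_E_def weyl_F_def weyl_K_def)
qed

lemma not_weyl_irreducible_if_mod_less: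
  assumes "0 < e"
    and vanish: "\<And>m t. t \<le> m \<Longrightarrow> m mod e < t mod e \<Longrightarrow> qbin z m t = 0"
    and "e \<le> lam" and "Suc (lam mod e) < e"
  shows "\<not> weyl_irreducible z lam"
proof
  define W where "W = {v \<in> weyl_space lam. \<forall>i. i mod e \<le> lam mod e \<longrightarrow> v i = 0}"
  assume "weyl_irreducible z lam"
  moreover have "weyl_submodule z lam W"
    unfolding W_def using \<open>0 < e\<close> vanish by (rule weyl_submodule_high_residues)
  ultimately have "W = {\<lambda>i. 0} \<or> W = weyl_space lam"
    by (simp add: weyl_irreducible_def)
  moreover have "weyl_basis (e - 1) \<in> W"
    using assms(3,4) by (auto simp: W_def weyl_space_def weyl_basis_def)
  moreover have "weyl_basis 0 \<in> weyl_space lam - W"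
    by (simp add: W_def weyl_space_def weyl_basis_def)
  ultimately show False
    using weyl_basis_neq_0 by blast
qed

lemma weyl_irreducible_iff_mod:
  assumes "0 < e"
    and vanish_iff: "\<And>m t. t \<le> m \<Longrightarrow> qbin z m t = 0 \<longleftrightarrow> m mod e < t mod e"
  shows "weyl_irreducible z lam \<longleftrightarrow> lam < e \<or> Suc (lam mod e) = e"
proof
  assume irreducible: "weyl_irreducible z lam"
  show "lam < e \<or> Suc (lam mod e) = e"
  proof (rule ccontr)
    assume "\<not> (lam < e \<or> Suc (lam mod e) = e)"
    moreover have "lam mod e < e"
      using \<open>0 < e\<close> by simp
    ultimately have "e \<le> lam" "Suc (lam mod e) < e"
      by linarith+
    then show False
      using not_weyl_irreducible_if_mod_less[OF \<open>0 < e\<close>] vanish_iff irreducible by blast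
  qed
next
  assume residue: "lam < e \<or> Suc (lam mod e) = e"
  have "r mod e \<le> lam mod e" if "r \<le> lam" for r
  proof (cases "lam < e")
    case True
    then show ?thesis
      using that mod_less_eq_dividend[of r e] by simp
  next
    case False
    then show ?thesis
      using residue mod_less_divisor[OF \<open>0 < e\<close>, of r] by linarith
  qed
  then show "weyl_irreducible z lam"
    using vanish_iff by (intro weyl_irreducible_if_qbin_neq_0) (simp add: not_less)
qed

lemma dvd_double_iff_s_of_dvd: "l dvd 2 * k \<longleftrightarrow> s_of l dvd k"
proof (cases "odd l")
  case True
  then have "coprime l 2"
    by simp
  then show ?thesis
    using True by (simp add: s_of_def coprime_dvd_mult_right_iff)
next
  case False
  then obtain m where "l = 2 * m"
    by (auto elim: evenE)
  then show ?thesis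
    by (simp add: s_of_def)
qed

lemma s_of_pos: "0 < l \<Longrightarrow> 0 < s_of l"
  unfolding s_of_def by (cases "odd l") (auto elim: evenE)

lemma cong_minus_one_iff_mod:
  assumes "0 < e"
  shows "[int lam = -1] (mod int e) \<longleftrightarrow> Suc (lam mod e) = e"
proof -
  have "[int lam = -1] (mod int e) \<longleftrightarrow> e dvd Suc lam"
    by (simp add: cong_iff_dvd_diff ac_simps flip: int_dvd_int_iff)
  also have "\<dots> \<longleftrightarrow> Suc (lam mod e) = e"
    using assms by (simp add: dvd_eq_mod_eq_0 mod_Suc)
  finally show ?thesis .
qed

theorem proposition3p1:
  fixes z :: complex and l lam :: nat
  assumes "l \<ge> 1" and "z ^ l = 1" and "\<forall>k. 0 < k \<and> k < l \<longrightarrow> z ^ k \<noteq> 1"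
  shows "weyl_irreducible z lam \<longleftrightarrow>
           (lam < s_of l \<or> [int lam = -1] (mod int (s_of l)))"
proof -
  have "0 < l" and "z \<noteq> 0"
    using assms(1,2) by (auto simp: power_0_left)
  have "0 < s_of l"
    using \<open>0 < l\<close> by (rule s_of_pos)
  have order: "(z ^ 2) ^ k = 1 \<longleftrightarrow> s_of l dvd k" for k
    using power_eq_1_iff_dvd_order[OF \<open>0 < l\<close> assms(2,3), of "2 * k"]
    by (simp add: power_mult dvd_double_iff_s_of_dvd)
  have "qbin z m t = 0 \<longleftrightarrow> m mod s_of l < t mod s_of l" if "t \<le> m" for m t
    using \<open>z \<noteq> 0\<close> order \<open>0 < s_of l\<close> that by (rule qbin_eq_0_iff)
  then have "weyl_irreducible z lam \<longleftrightarrow> lam < s_of l \<or> Suc (lam mod s_of l) = s_of l"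
    using \<open>0 < s_of l\<close> by (intro weyl_irreducible_iff_mod)
  with cong_minus_one_iff_mod[OF \<open>0 < s_of l\<close>] show ?thesis
    by simp
qed

end
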